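(* Let $\{c_n\}_{n\ge1}$ be a real sequence with $\sum_{n=1}^\infty |c_n|<+\infty$, such that $\sum_{n=N}^{\infty}(c_n)^2>0$ and $\sum_{n=N}^\infty c_n\neq 0$ for every $N\ge1$. Let $f(x):=\sum_{n=1}^\infty c_n\varphi^{(n)}(x)$ and $f_N(x):=\sum_{n=1}^{N-1}c_n\varphi^{(n)}(x)$ for $x\in[0,1]$, $N=1,2,\dots$. Then $$\lim_{N\to\infty}\int_0^1\left(\frac{f(x)-f_N(x)}{\frac12\sum_{n=N}^\infty c_n}-1\right)^2dx=0$$ holds if and only if $$\lim_{N\to\infty}\frac{\sum_{n=N}^\infty (c_n)^2}{\left(\sum_{n=N}^\infty c_n\right)^2}=0.$$ Moreover, under this last condition, for every $\varepsilon>0$, $$\lim_{N\to\infty}P\left(\left\{x\in[0,1]: 1-\varepsilon\le \frac{f(x)-f_N(x)}{\frac12\sum_{n=N}^\infty c_n}\le 1+\varepsilon\right\}\right)=1.$$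
   Context: The tent map on $[0,1]$ is $\varphi(x)=2x$ for $x\in[0,1/2]$ and $\varphi(x)=2(1-x)$ for $x\in[1/2,1]$; it is extended to $\mathbb{R}$ by $\varphi(x):=\varphi(x-[x])$ (period 1), and $\varphi^{(n)}$ denotes the $n$-fold iterate of $\varphi$, so that $\varphi^{(n)}(x)=\varphi(2^{n-1}x)$. $P$ denotes Lebesgue measure on $[0,1]$ (with the Borel $\sigma$-field), viewed as a probability space. *)

theory Defs
  imports "HOL-Analysis.Analysis"
begin

definition tent :: "real \<Rightarrow> real" where
  "tent x = (let y = frac x in if y \<le> 1/2 then 2 * y else 2 * (1 - y))"

definition tent_iter :: "nat \<Rightarrow> real \<Rightarrow> real" where
  "tent_iter n = (tent ^^ n)"

end

theory Submission
  imports Defs "HOL-Probability.Probability_Measure"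
begin

text \<open>Lebesgue measure on [0,1] is invariant under the tent map, and for k \<ge> 1 the iterate
  \<open>tent_iter k\<close> is symmetric about 1/2. Hence all iterates have mean 1/2 and second moment 1/3,
  and for m < n the product \<open>tent_iter m x * tent_iter n x\<close> is the pull-back under
  \<open>tent_iter m\<close> of \<open>x * tent_iter (n - m) x\<close>, whose integral is 1/4 by the symmetry: the
  iterates are pairwise uncorrelated with variance 1/12. So the tail \<open>f - f\<^sub>N\<close>, a series
  with coefficients \<open>c\<^sub>n\<close> (n \<ge> N), has mean \<open>S\<^sub>N/2\<close> and variance \<open>Q\<^sub>N/12\<close>, where \<open>S\<^sub>N\<close>
  and \<open>Q\<^sub>N\<close> are the tail sums of \<open>c\<^sub>n\<close> and \<open>c\<^sub>n\<^sup>2\<close>, and the mean square deviation of the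
  normalized tail from 1 is exactly \<open>Q\<^sub>N / (3 S\<^sub>N\<^sup>2)\<close>. This gives the equivalence, and
  Chebyshev's inequality gives the convergence in probability.\<close>

lemma summable_mult_bounded:
  fixes d u :: "nat \<Rightarrow> real"
  assumes "summable (\<lambda>n. \<bar>d n\<bar>)" and "\<And>n. \<bar>u n\<bar> \<le> B"
  shows "summable (\<lambda>n. \<bar>d n * u n\<bar>)"
  by (rule summable_comparison_test[OF _ summable_mult2[OF assms(1), of B]])
    (auto simp: abs_mult intro!: mult_left_mono assms(2))

lemma abs_suminf_mult_bounded_le:
  fixes d u :: "nat \<Rightarrow> real"
  assumes d: "summable (\<lambda>n. \<bar>d n\<bar>)" and u: "\<And>n. \<bar>u n\<bar> \<le> B"
  shows "\<bar>\<Sum>n. d n * u n\<bar> \<le> (\<Sum>n. \<bar>d n\<bar>) * B"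
proof -
  have "\<bar>\<Sum>n. d n * u n\<bar> \<le> (\<Sum>n. \<bar>d n * u n\<bar>)"
    using summable_rabs[OF summable_mult_bounded[OF d u]] .
  also have "\<dots> \<le> (\<Sum>n. \<bar>d n\<bar> * B)"
    by (intro suminf_le summable_mult_bounded[OF d u] summable_mult2[OF d])
      (auto simp: abs_mult intro!: mult_left_mono u)
  also have "\<dots> = (\<Sum>n. \<bar>d n\<bar>) * B"
    using suminf_mult2[OF d] by simp
  finally show ?thesis .
qed

lemma summable_power2_if_abs_summable:
  fixes d :: "nat \<Rightarrow> real"
  assumes "summable (\<lambda>n. \<bar>d n\<bar>)"
  shows "summable (\<lambda>n. (d n)\<^sup>2)"
proof -
  have "\<bar>d n\<bar> \<le> (\<Sum>n. \<bar>d n\<bar>)" for n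
    using sum_le_suminf[OF assms, of "{n}"] by simp
  then have "summable (\<lambda>n. \<bar>d n * d n\<bar>)"
    by (rule summable_mult_bounded[OF assms])
  then show ?thesis
    unfolding power2_eq_square by (rule summable_rabs_cancel)
qed

lemma suminf_minus_partial_sum:
  fixes a :: "nat \<Rightarrow> 'a::real_normed_vector"
  assumes "summable (\<lambda>n. a (n + 1))" and "N \<ge> 1"
  shows "(\<Sum>n. a (n + 1)) - (\<Sum>n = 1..<N. a n) = (\<Sum>n. a (n + N))"
proof -
  have "(\<Sum>n. a (n + 1)) = (\<Sum>n. a (n + (N - 1) + 1)) + (\<Sum>i<N - 1. a (i + 1))"
    by (rule suminf_split_initial_segment[OF assms(1)])
  moreover have "(\<Sum>i<N - 1. a (i + 1)) = (\<Sum>n = 1..<N. a n)"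
    using sum.shift_bounds_Suc_ivl[of a 0 "N - 1"] \<open>N \<ge> 1\<close> by (simp add: atLeast0LessThan)
  ultimately show ?thesis
    using \<open>N \<ge> 1\<close> by simp
qed

lemma (in finite_measure)
  fixes d :: "nat \<Rightarrow> real" and \<psi> :: "nat \<Rightarrow> 'a \<Rightarrow> real" and g :: "'a \<Rightarrow> real"
  assumes d: "summable (\<lambda>n. \<bar>d n\<bar>)"
    and [measurable]: "\<And>n. \<psi> n \<in> borel_measurable M"
    and bound: "\<And>n x. x \<in> space M \<Longrightarrow> \<bar>\<psi> n x\<bar> \<le> B"
    and g: "\<And>x. x \<in> space M \<Longrightarrow> g x = (\<Sum>n. d n * \<psi> n x)"
  shows integrable_bounded_series: "integrable M g"
    and integral_bounded_series: "integral\<^sup>L M g = (\<Sum>n. d n * integral\<^sup>L M (\<psi> n))"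
proof -
  have term_bound: "\<bar>d n * \<psi> n x\<bar> \<le> \<bar>d n\<bar> * B" if "x \<in> space M" for n x
    using bound[OF that] by (simp add: abs_mult mult_left_mono)
  have int: "integrable M (\<lambda>x. d n * \<psi> n x)" for n
    by (rule integrable_const_bound[of _ "\<bar>d n\<bar> * B"]) (use term_bound in auto)
  have "(\<integral>x. norm (d n * \<psi> n x) \<partial>M) \<le> (\<integral>x. \<bar>d n\<bar> * B \<partial>M)" for n
    by (intro integral_mono) (use int term_bound in auto)
  then have "summable (\<lambda>n. \<integral>x. norm (d n * \<psi> n x) \<partial>M)"
    by (intro summable_comparison_test[OF _ summable_mult2[OF d, of "B * measure M (space M)"]])
      (auto simp: mult_ac)
  moreover have "AE x in M. summable (\<lambda>n. norm (d n * \<psi> n x))"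
    by (intro AE_I2 summable_comparison_test[OF _ summable_mult2[OF d]]) (use term_bound in auto)
  ultimately have "integrable M (\<lambda>x. \<Sum>n. d n * \<psi> n x)"
    and "(\<integral>x. (\<Sum>n. d n * \<psi> n x) \<partial>M) = (\<Sum>n. d n * integral\<^sup>L M (\<psi> n))"
    using integrable_suminf[OF int] integral_suminf[OF int] by simp_all
  moreover have "integrable M g \<longleftrightarrow> integrable M (\<lambda>x. \<Sum>n. d n * \<psi> n x)"
    by (rule Bochner_Integration.integrable_cong) (simp_all add: g)
  moreover have "integral\<^sup>L M g = (\<integral>x. (\<Sum>n. d n * \<psi> n x) \<partial>M)"
    by (rule Bochner_Integration.integral_cong) (simp_all add: g)
  ultimately show "integrable M g" "integral\<^sup>L M g = (\<Sum>n. d n * integral\<^sup>L M (\<psi> n))"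
    by simp_all
qed

lemma (in prob_space) variance_divide:
  fixes X :: "'a \<Rightarrow> real"
  shows "variance (\<lambda>x. X x / a) = variance X / a\<^sup>2"
proof -
  have "(X x / a - expectation (\<lambda>x. X x / a))\<^sup>2 = (X x - expectation X)\<^sup>2 / a\<^sup>2" for x
    by (simp add: power_divide flip: diff_divide_distrib)
  then show ?thesis by simp
qed

lemma (in prob_space) uncorrelated_series_cross_moment:
  fixes d :: "nat \<Rightarrow> real" and \<psi> :: "nat \<Rightarrow> 'a \<Rightarrow> real" and g :: "'a \<Rightarrow> real"
  assumes d: "summable (\<lambda>n. \<bar>d n\<bar>)"
    and [measurable]: "\<And>n. \<psi> n \<in> borel_measurable M"
    and bound: "\<And>n x. x \<in> space M \<Longrightarrow> \<bar>\<psi> n x\<bar> \<le> B"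
    and corr: "\<And>m n. expectation (\<lambda>x. \<psi> m x * \<psi> n x) = \<mu>\<^sup>2 + (if m = n then v else 0)"
    and g: "\<And>x. x \<in> space M \<Longrightarrow> g x = (\<Sum>n. d n * \<psi> n x)"
  shows "integrable M (\<lambda>x. \<psi> m x * g x)"
    and "expectation (\<lambda>x. \<psi> m x * g x) = \<mu>\<^sup>2 * (\<Sum>n. d n) + v * d m"
proof -
  have "summable d"
    using d summable_rabs_cancel by blast
  have summable_terms: "summable (\<lambda>n. d n * \<psi> n x)" if "x \<in> space M" for x
    by (rule summable_rabs_cancel, rule summable_mult_bounded[OF d]) (rule bound[OF that])
  have eq: "\<psi> m x * g x = (\<Sum>n. d n * (\<psi> m x * \<psi> n x))" if "x \<in> space M" for x
    using suminf_mult[OF summable_terms[OF that], of "\<psi> m x"] g[OF that] by (simp add: algebra_simps)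
  have prod_bound: "\<bar>\<psi> m x * \<psi> n x\<bar> \<le> B * B" if "x \<in> space M" for n x
    using bound[OF that, of m] bound[OF that, of n] abs_ge_zero[of "\<psi> n x"]
    by (simp add: abs_mult mult_mono')
  note series = integrable_bounded_series[where \<psi> = "\<lambda>n x. \<psi> m x * \<psi> n x", OF d _ prod_bound eq]
    integral_bounded_series[where \<psi> = "\<lambda>n x. \<psi> m x * \<psi> n x", OF d _ prod_bound eq]
  show "integrable M (\<lambda>x. \<psi> m x * g x)"
    using series(1) by simp
  have "d n * (\<mu>\<^sup>2 + (if m = n then v else 0)) = \<mu>\<^sup>2 * d n + (if n = m then v * d n else 0)" for n
    by (auto simp: algebra_simps)
  then have "expectation (\<lambda>x. \<psi> m x * g x) = (\<Sum>n. \<mu>\<^sup>2 * d n + (if n = m then v * d n else 0))"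
    using series(2) by (simp add: corr)
  also have "\<dots> = \<mu>\<^sup>2 * (\<Sum>n. d n) + v * d m"
  proof -
    have single: "(\<lambda>n. if n = m then v * d n else 0) sums (v * d m)"
      by (rule sums_single)
    show ?thesis
      using suminf_add[OF summable_mult[OF \<open>summable d\<close>, of "\<mu>\<^sup>2"] sums_summable[OF single]]
        suminf_mult[OF \<open>summable d\<close>, of "\<mu>\<^sup>2"] sums_unique[OF single]
      by simp
  qed
  finally show "expectation (\<lambda>x. \<psi> m x * g x) = \<mu>\<^sup>2 * (\<Sum>n. d n) + v * d m" .
qed

lemma (in prob_space) uncorrelated_series_moments:
  fixes d :: "nat \<Rightarrow> real" and \<psi> :: "nat \<Rightarrow> 'a \<Rightarrow> real" and g :: "'a \<Rightarrow> real"
  assumes d: "summable (\<lambda>n. \<bar>d n\<bar>)"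
    and [measurable]: "\<And>n. \<psi> n \<in> borel_measurable M"
    and bound: "\<And>n x. x \<in> space M \<Longrightarrow> \<bar>\<psi> n x\<bar> \<le> B"
    and mean: "\<And>n. expectation (\<psi> n) = \<mu>"
    and corr: "\<And>m n. expectation (\<lambda>x. \<psi> m x * \<psi> n x) = \<mu>\<^sup>2 + (if m = n then v else 0)"
    and g: "\<And>x. x \<in> space M \<Longrightarrow> g x = (\<Sum>n. d n * \<psi> n x)"
  shows "integrable M g" and "expectation g = \<mu> * (\<Sum>n. d n)"
    and "integrable M (\<lambda>x. (g x)\<^sup>2)" and "variance g = v * (\<Sum>n. (d n)\<^sup>2)"
proof -
  define S where "S = (\<Sum>n. d n)"
  have "summable d"
    using d summable_rabs_cancel by blast
  note cross = uncorrelated_series_cross_moment[OF d _ bound corr g, simplified]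
  show g_int: "integrable M g"
    by (rule integrable_bounded_series[OF d _ bound g]) simp
  have "expectation g = (\<Sum>n. d n * \<mu>)"
    using integral_bounded_series[OF d _ bound g] by (simp add: mean)
  also have "\<dots> = \<mu> * S"
    unfolding S_def using suminf_mult2[OF \<open>summable d\<close>] by (simp add: mult.commute)
  finally have mean_g: "expectation g = \<mu> * S" .
  then show "expectation g = \<mu> * (\<Sum>n. d n)"
    unfolding S_def .
  have summable_terms: "summable (\<lambda>n. d n * \<psi> n x)" if "x \<in> space M" for x
    by (rule summable_rabs_cancel, rule summable_mult_bounded[OF d]) (rule bound[OF that])
  \<comment> \<open>Expanding one factor of \<open>g\<^sup>2\<close> reduces the second moment to the cross moments.\<close>
  have eq: "(g x)\<^sup>2 = (\<Sum>n. d n * (\<psi> n x * g x))" if "x \<in> space M" for x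
    using suminf_mult2[OF summable_terms[OF that], of "g x"] g[OF that]
    by (simp add: power2_eq_square algebra_simps)
  have cross_bound: "\<bar>\<psi> n x * g x\<bar> \<le> B * ((\<Sum>n. \<bar>d n\<bar>) * B)" if "x \<in> space M" for n x
    using bound[OF that, of n] abs_suminf_mult_bounded_le[OF d, of "\<lambda>n. \<psi> n x" B, OF bound[OF that]]
      g[OF that] abs_ge_zero[of "g x"] by (simp add: abs_mult mult_mono')
  note series = integrable_bounded_series[where \<psi> = "\<lambda>n x. \<psi> n x * g x", OF d _ cross_bound eq]
    integral_bounded_series[where \<psi> = "\<lambda>n x. \<psi> n x * g x", OF d _ cross_bound eq]
  show g2_int: "integrable M (\<lambda>x. (g x)\<^sup>2)"
    by (rule series(1)) (use cross(1) in \<open>simp add: borel_measurable_integrable\<close>)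
  have "expectation (\<lambda>x. (g x)\<^sup>2) = (\<Sum>n. d n * expectation (\<lambda>x. \<psi> n x * g x))"
    by (rule series(2)) (use cross(1) in \<open>simp add: borel_measurable_integrable\<close>)
  also have "\<dots> = (\<Sum>n. \<mu>\<^sup>2 * S * d n) + (\<Sum>n. v * (d n)\<^sup>2)"
    unfolding cross(2) S_def[symmetric]
    by (simp add: algebra_simps power2_eq_square suminf_add summable_mult \<open>summable d\<close>
        summable_power2_if_abs_summable[OF d, unfolded power2_eq_square])
  also have "\<dots> = (\<mu> * S)\<^sup>2 + v * (\<Sum>n. (d n)\<^sup>2)"
    unfolding suminf_mult[OF \<open>summable d\<close>] suminf_mult[OF summable_power2_if_abs_summable[OF d]] S_def
    by (simp add: power2_eq_square)
  finally have second_moment: "expectation (\<lambda>x. (g x)\<^sup>2) = (\<mu> * S)\<^sup>2 + v * (\<Sum>n. (d n)\<^sup>2)" .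
  have "variance g = expectation (\<lambda>x. (g x)\<^sup>2) - (expectation g)\<^sup>2"
    by (rule variance_eq[OF g_int g2_int])
  also have "\<dots> = v * (\<Sum>n. (d n)\<^sup>2)"
    unfolding second_moment mean_g by simp
  finally show "variance g = v * (\<Sum>n. (d n)\<^sup>2)" .
qed

lemma (in prob_space) normalized_deviation:
  fixes g :: "'a \<Rightarrow> real"
  assumes [measurable]: "g \<in> borel_measurable M"
    and g2: "integrable M (\<lambda>x. (g x)\<^sup>2)" and mean: "expectation g = a" and "a \<noteq> 0"
  shows "expectation (\<lambda>x. (g x / a - 1)\<^sup>2) = variance g / a\<^sup>2"
    and "\<epsilon> > 0 \<Longrightarrow>
      1 - variance g / a\<^sup>2 / \<epsilon>\<^sup>2 \<le> prob {x \<in> space M. 1 - \<epsilon> \<le> g x / a \<and> g x / a \<le> 1 + \<epsilon>}"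
proof -
  have mean_normalized: "expectation (\<lambda>x. g x / a) = 1"
    using mean \<open>a \<noteq> 0\<close> by simp
  then have "expectation (\<lambda>x. (g x / a - 1)\<^sup>2) = variance (\<lambda>x. g x / a)"
    by simp
  also have "\<dots> = variance g / a\<^sup>2"
    by (rule variance_divide)
  finally show deviation: "expectation (\<lambda>x. (g x / a - 1)\<^sup>2) = variance g / a\<^sup>2" .
  assume "\<epsilon> > 0"
  define far where "far = {x \<in> space M. \<epsilon> \<le> \<bar>g x / a - 1\<bar>}"
  have "integrable M (\<lambda>x. (g x / a)\<^sup>2)"
    using g2 by (simp add: power_divide)
  then have "prob far \<le> expectation (\<lambda>x. (g x / a - 1)\<^sup>2) / \<epsilon>\<^sup>2"
    unfolding far_def using \<open>\<epsilon> > 0\<close>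
    by (intro Chebyshev_inequality[of "\<lambda>x. g x / a", unfolded mean_normalized]) simp_all
  then have "prob far \<le> variance g / a\<^sup>2 / \<epsilon>\<^sup>2"
    unfolding deviation .
  moreover have "prob (space M - far) = 1 - prob far"
    by (rule prob_compl) (simp add: far_def)
  moreover have "prob (space M - far) \<le> prob {x \<in> space M. 1 - \<epsilon> \<le> g x / a \<and> g x / a \<le> 1 + \<epsilon>}"
    by (rule finite_measure_mono) (auto simp: far_def)
  ultimately show "1 - variance g / a\<^sup>2 / \<epsilon>\<^sup>2 \<le> prob {x \<in> space M. 1 - \<epsilon> \<le> g x / a \<and> g x / a \<le> 1 + \<epsilon>}"
    by linarith
qed

lemma (in prob_space) tendsto_prob_oneI:
  assumes "\<forall>\<^sub>F n in F. 1 - a n \<le> prob (A n)" and "(a \<longlongrightarrow> 0) F"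
  shows "((\<lambda>n. prob (A n)) \<longlongrightarrow> 1) F"
proof (rule tendsto_sandwich[of "\<lambda>n. 1 - a n" _ _ "\<lambda>_. 1"])
  show "((\<lambda>n. 1 - a n) \<longlongrightarrow> 1) F"
    using tendsto_diff[OF tendsto_const[of 1] assms(2)] by simp
qed (use assms(1) prob_le_1 in auto)

lemma tent_in_01: "tent x \<in> {0..1}"
  unfolding tent_def Let_def using frac_lt_1[of x] frac_ge_0[of x] by auto

lemma tent_iter_in_01: "x \<in> {0..1} \<Longrightarrow> tent_iter n x \<in> {0..1}"
  by (cases n) (use tent_in_01 in \<open>auto simp: tent_iter_def\<close>)

lemma tent_iter_Suc: "tent_iter (Suc n) x = tent (tent_iter n x)"
  by (simp add: tent_iter_def)

lemma tent_iter_add: "tent_iter (m + n) x = tent_iter n (tent_iter m x)"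
  unfolding tent_iter_def by (metis add.commute funpow_add comp_apply)

lemma borel_measurable_tent [measurable]: "tent \<in> borel_measurable borel"
  unfolding tent_def Let_def frac_def by measurable

lemma borel_measurable_tent_iter [measurable]: "tent_iter n \<in> borel_measurable borel"
  unfolding tent_iter_def by measurable

lemma tent_on_01: "x \<in> {0..1} \<Longrightarrow> tent x = (if x \<le> 1/2 then 2 * x else 2 - 2 * x)"
  by (cases "x = 1") (auto simp: tent_def frac_eq)

lemma tent_iter_reflect: "x \<in> {0..1} \<Longrightarrow> n \<noteq> 0 \<Longrightarrow> tent_iter n (1 - x) = tent_iter n x"
proof -
  assume "x \<in> {0..1}" "n \<noteq> 0"
  then have "tent (1 - x) = tent x"
    using tent_on_01[of x] tent_on_01[of "1 - x"] by auto
  moreover obtain j where "n = Suc j"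
    using \<open>n \<noteq> 0\<close> not0_implies_Suc by blast
  ultimately show ?thesis
    using tent_iter_add[of 1 j] by (simp add: tent_iter_def)
qed

lemma has_integral_reflect_01:
  fixes h :: "real \<Rightarrow> real"
  assumes "(h has_integral I) {0..1}"
  shows "((\<lambda>x. h (1 - x)) has_integral I) {0..1}"
proof -
  have "((\<lambda>x. h (- x)) has_integral I) {-1..-0}"
    using assms has_integral_reflect_real by blast
  from has_integral_affinity'[OF this[unfolded cbox_interval[symmetric]], of 1 "-1"]
  show ?thesis by (simp add: cbox_interval)
qed

lemma has_integral_comp_tent:
  fixes h :: "real \<Rightarrow> real"
  assumes h: "(h has_integral I) {0..1}"
  shows "((\<lambda>x. h (tent x)) has_integral I) {0..1}"
proof -
  have "((\<lambda>x. h (2 * x)) has_integral I / 2) {0..1/2}"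
    using has_integral_affinity'[OF h[unfolded cbox_interval[symmetric]], of 2 0]
    by (simp add: cbox_interval)
  then have left: "((\<lambda>x. h (tent x)) has_integral I / 2) {0..1/2}"
    by (rule has_integral_eq[rotated]) (simp add: tent_on_01)
  have "((\<lambda>x. h (1 - x)) has_integral I) {0..1}"
    using has_integral_reflect_01[OF h] .
  from has_integral_affinity'[OF this[unfolded cbox_interval[symmetric]], of 2 "-1"]
  have "((\<lambda>x. h (2 - 2 * x)) has_integral I / 2) {1/2..1}"
    by (simp add: cbox_interval algebra_simps)
  then have right: "((\<lambda>x. h (tent x)) has_integral I / 2) {1/2..1}"
    by (rule has_integral_eq[rotated]) (auto simp: tent_on_01 intro: arg_cong[where f=h])
  show ?thesis
    using has_integral_combine[OF _ _ left right] by simp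
qed

lemma has_integral_comp_tent_iter:
  fixes h :: "real \<Rightarrow> real"
  assumes "(h has_integral I) {0..1}"
  shows "((\<lambda>x. h (tent_iter n x)) has_integral I) {0..1}"
  using assms
proof (induction n arbitrary: h)
  case 0
  then show ?case by (simp add: tent_iter_def)
next
  case (Suc n)
  from Suc.IH[OF has_integral_comp_tent[OF Suc.prems]] show ?case
    by (simp add: tent_iter_Suc)
qed

lemma prob_space_lebesgue_on_01: "prob_space (lebesgue_on {0..1::real})"
  by (rule prob_space_restrict_space) auto

lemma has_integral_lebesgue_on_01:
  fixes f :: "real \<Rightarrow> real"
  assumes "f \<in> borel_measurable borel" and "\<And>x. x \<in> {0..1} \<Longrightarrow> \<bar>f x\<bar> \<le> B"
  shows "(f has_integral integral\<^sup>L (lebesgue_on {0..1}) f) {0..1}"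
proof -
  interpret prob_space "lebesgue_on {0..1::real}"
    by (rule prob_space_lebesgue_on_01)
  have "integrable (lebesgue_on {0..1}) f"
    by (rule integrable_const_bound[of _ B])
      (use assms in \<open>auto simp: measurable_completion measurable_restrict_space1\<close>)
  then show ?thesis
    by (rule has_integral_integral_lebesgue_on) auto
qed

lemma lebesgue_on_01_integral_eqI:
  fixes f :: "real \<Rightarrow> real"
  assumes "f \<in> borel_measurable borel" and "\<And>x. x \<in> {0..1} \<Longrightarrow> \<bar>f x\<bar> \<le> B"
    and "(f has_integral I) {0..1}"
  shows "integral\<^sup>L (lebesgue_on {0..1}) f = I"
  using has_integral_lebesgue_on_01[OF assms(1,2)] assms(3) by (rule has_integral_unique)

lemma has_integral_id_mult_tent_iter:
  "((\<lambda>x. x * tent_iter k x) has_integral (if k = 0 then 1/3 else 1/4)) {0..1}"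
proof (cases "k = 0")
  case True
  have "((\<lambda>x::real. x * x) has_integral (1^3/3 - 0^3/3)) {0..1}"
    by (rule fundamental_theorem_of_calculus)
      (auto simp flip: has_real_derivative_iff_has_vector_derivative
        intro!: derivative_eq_intros simp: power2_eq_square)
  with True show ?thesis
    by (simp add: tent_iter_def)
next
  case False
  define J where "J = integral\<^sup>L (lebesgue_on {0..1}) (\<lambda>x. x * tent_iter k x)"
  have "\<bar>x * tent_iter k x\<bar> \<le> 1" if "x \<in> {0..1}" for x
    using that tent_iter_in_01[OF that, of k] by (simp add: abs_mult mult_le_one)
  then have J: "((\<lambda>x. x * tent_iter k x) has_integral J) {0..1}"
    unfolding J_def by (intro has_integral_lebesgue_on_01) simp_all
  have "((\<lambda>x. (1 - x) * tent_iter k (1 - x)) has_integral J) {0..1}"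
    using has_integral_reflect_01[OF J] by simp
  then have "((\<lambda>x. (1 - x) * tent_iter k x) has_integral J) {0..1}"
    by (rule has_integral_eq[rotated]) (simp add: tent_iter_reflect False)
  from has_integral_add[OF J this] have "(tent_iter k has_integral 2 * J) {0..1}"
    by (simp add: algebra_simps)
  moreover have "(tent_iter k has_integral 1/2) {0..1}"
    using has_integral_comp_tent_iter[OF ident_has_integral[of 0 1], of k] by simp
  ultimately have "2 * J = 1/2"
    by (rule has_integral_unique)
  then have "J = 1/4"
    by simp
  with J False show ?thesis
    by simp
qed

lemma integral_tent_iter: "integral\<^sup>L (lebesgue_on {0..1}) (tent_iter n) = 1/2"
proof (rule lebesgue_on_01_integral_eqI[of _ 1])
  show "\<bar>tent_iter n x\<bar> \<le> 1" if "x \<in> {0..1}" for x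
    using tent_iter_in_01[OF that, of n] by simp
  show "(tent_iter n has_integral 1/2) {0..1}"
    using has_integral_comp_tent_iter[OF ident_has_integral[of 0 1], of n] by simp
qed simp

lemma integral_tent_iter_mult:
  "integral\<^sup>L (lebesgue_on {0..1}) (\<lambda>x. tent_iter m x * tent_iter n x) = 1/4 + (if m = n then 1/12 else 0)"
proof -
  have ordered: "integral\<^sup>L (lebesgue_on {0..1}) (\<lambda>x. tent_iter m x * tent_iter n x)
      = 1/4 + (if m = n then 1/12 else 0)" if "m \<le> n" for m n
  proof (rule lebesgue_on_01_integral_eqI[of _ 1])
    show "\<bar>tent_iter m x * tent_iter n x\<bar> \<le> 1" if "x \<in> {0..1}" for x
      using tent_iter_in_01[OF that, of m] tent_iter_in_01[OF that, of n]
      by (simp add: abs_mult mult_le_one)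
    have "tent_iter n x = tent_iter (n - m) (tent_iter m x)" for x
      using \<open>m \<le> n\<close> tent_iter_add[of m "n - m"] by simp
    moreover have "(if n - m = 0 then 1/3 else 1/4) = 1/4 + (if m = n then 1/12 else (0::real))"
      using \<open>m \<le> n\<close> by auto
    ultimately show "((\<lambda>x. tent_iter m x * tent_iter n x) has_integral 1/4 + (if m = n then 1/12 else 0)) {0..1}"
      using has_integral_comp_tent_iter[OF has_integral_id_mult_tent_iter[of "n - m"], of m] by simp
  qed simp
  show ?thesis
  proof (cases "m \<le> n")
    case True
    then show ?thesis by (rule ordered)
  next
    case False
    then have "integral\<^sup>L (lebesgue_on {0..1}) (\<lambda>x. tent_iter n x * tent_iter m x)
        = 1/4 + (if n = m then 1/12 else 0)"
      by (intro ordered) simp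
    then show ?thesis
      by (simp add: mult.commute eq_commute)
  qed
qed

lemma tent_series_tail:
  fixes c :: "nat \<Rightarrow> real"
  assumes "summable (\<lambda>n. \<bar>c (n + 1)\<bar>)" and "N \<ge> 1" and "x \<in> {0..1}"
  shows "(\<Sum>n. c (n + 1) * tent_iter (n + 1) x) - (\<Sum>n = 1..<N. c n * tent_iter n x)
    = (\<Sum>n. c (n + N) * tent_iter (n + N) x)"
proof -
  have "summable (\<lambda>n. \<bar>c (n + 1) * tent_iter (n + 1) x\<bar>)"
    by (rule summable_mult_bounded[OF assms(1), of _ 1]) (use tent_iter_in_01[OF assms(3)] in simp)
  then have "summable (\<lambda>n. c (n + 1) * tent_iter (n + 1) x)"
    by (rule summable_rabs_cancel)
  from suminf_minus_partial_sum[of "\<lambda>n. c n * tent_iter n x", OF this \<open>N \<ge> 1\<close>] show ?thesis .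
qed

lemma tent_series_deviation:
  fixes d :: "nat \<Rightarrow> real" and g :: "real \<Rightarrow> real"
  assumes d: "summable (\<lambda>n. \<bar>d n\<bar>)" and S: "(\<Sum>n. d n) \<noteq> 0"
    and g: "\<And>x. x \<in> {0..1} \<Longrightarrow> g x = (\<Sum>n. d n * tent_iter (n + N) x)"
  shows "integral\<^sup>L (lebesgue_on {0..1}) (\<lambda>x. (g x / ((1/2) * (\<Sum>n. d n)) - 1)\<^sup>2)
      = (\<Sum>n. (d n)\<^sup>2) / (\<Sum>n. d n)\<^sup>2 / 3"
    and "\<epsilon> > 0 \<Longrightarrow> 1 - (\<Sum>n. (d n)\<^sup>2) / (\<Sum>n. d n)\<^sup>2 / 3 / \<epsilon>\<^sup>2
      \<le> measure (lebesgue_on {0..1}) {x \<in> {0..1}. 1 - \<epsilon> \<le> g x / ((1/2) * (\<Sum>n. d n))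
                                          \<and> g x / ((1/2) * (\<Sum>n. d n)) \<le> 1 + \<epsilon>}"
proof -
  interpret prob_space "lebesgue_on {0..1::real}"
    by (rule prob_space_lebesgue_on_01)
  have [measurable]: "tent_iter n \<in> borel_measurable (lebesgue_on {0..1})" for n
    by (simp add: measurable_completion measurable_restrict_space1)
  have "\<bar>tent_iter (n + N) x\<bar> \<le> 1" if "x \<in> space (lebesgue_on {0..1})" for n x
    using tent_iter_in_01[of x "n + N"] that by simp
  note moments = uncorrelated_series_moments[where \<psi> = "\<lambda>n. tent_iter (n + N)" and B = 1
    and \<mu> = "1/2" and v = "1/12", OF d _ this integral_tent_iter]
  have g_int: "integrable (lebesgue_on {0..1}) g"
    and mean: "expectation g = 1/2 * (\<Sum>n. d n)"
    and g2: "integrable (lebesgue_on {0..1}) (\<lambda>x. (g x)\<^sup>2)"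
    and var: "variance g = 1/12 * (\<Sum>n. (d n)\<^sup>2)"
    using moments by (simp_all add: integral_tent_iter_mult g power2_eq_square)
  have ratio: "variance g / (1/2 * (\<Sum>n. d n))\<^sup>2 = (\<Sum>n. (d n)\<^sup>2) / (\<Sum>n. d n)\<^sup>2 / 3"
    unfolding var using S by (simp add: field_simps power2_eq_square)
  note deviation = normalized_deviation[OF borel_measurable_integrable[OF g_int] g2 mean,
      unfolded ratio space_lebesgue_on]
  show "integral\<^sup>L (lebesgue_on {0..1}) (\<lambda>x. (g x / ((1/2) * (\<Sum>n. d n)) - 1)\<^sup>2)
      = (\<Sum>n. (d n)\<^sup>2) / (\<Sum>n. d n)\<^sup>2 / 3"
    using deviation(1) S by simp
  show "\<epsilon> > 0 \<Longrightarrow> 1 - (\<Sum>n. (d n)\<^sup>2) / (\<Sum>n. d n)\<^sup>2 / 3 / \<epsilon>\<^sup>2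
      \<le> measure (lebesgue_on {0..1}) {x \<in> {0..1}. 1 - \<epsilon> \<le> g x / ((1/2) * (\<Sum>n. d n))
                                          \<and> g x / ((1/2) * (\<Sum>n. d n)) \<le> 1 + \<epsilon>}"
    using deviation(2) S by simp
qed

theorem theorem1p1:
  fixes c :: "nat \<Rightarrow> real" and f :: "real \<Rightarrow> real" and fN :: "nat \<Rightarrow> real \<Rightarrow> real"
  assumes abs_summable: "summable (\<lambda>n. \<bar>c (n + 1)\<bar>)"
    and sq_pos: "\<And>N. N \<ge> 1 \<Longrightarrow> (\<Sum>n. (c (n + N))\<^sup>2) > 0"
    and tail_nz: "\<And>N. N \<ge> 1 \<Longrightarrow> (\<Sum>n. c (n + N)) \<noteq> 0"
    and f_def: "\<And>x. f x = (\<Sum>n. c (n + 1) * tent_iter (n + 1) x)"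
    and fN_def: "\<And>N x. fN N x = (\<Sum>n = 1..<N. c n * tent_iter n x)"
  shows "(((\<lambda>N. integral\<^sup>L (lebesgue_on {0..1})
              (\<lambda>x. ((f x - fN N x) / ((1/2) * (\<Sum>n. c (n + N))) - 1)\<^sup>2)) \<longlonglongrightarrow> 0)
         \<longleftrightarrow> ((\<lambda>N. (\<Sum>n. (c (n + N))\<^sup>2) / (\<Sum>n. c (n + N))\<^sup>2) \<longlonglongrightarrow> 0))
    \<and> (((\<lambda>N. (\<Sum>n. (c (n + N))\<^sup>2) / (\<Sum>n. c (n + N))\<^sup>2) \<longlonglongrightarrow> 0) \<longrightarrow>
         (\<forall>\<epsilon>::real. \<epsilon> > 0 \<longrightarrow> ((\<lambda>N. measure (lebesgue_on {0..1})
              {x \<in> {0..1}. 1 - \<epsilon> \<le> (f x - fN N x) / ((1/2) * (\<Sum>n. c (n + N)))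
                          \<and> (f x - fN N x) / ((1/2) * (\<Sum>n. c (n + N))) \<le> 1 + \<epsilon>}) \<longlonglongrightarrow> 1)))"
proof -
  have summable_tail: "summable (\<lambda>n. \<bar>c (n + N)\<bar>)" for N
    using abs_summable summable_iff_shift[of "\<lambda>n. \<bar>c n\<bar>" N] summable_Suc_iff[of "\<lambda>n. \<bar>c n\<bar>"]
    by simp
  have tail: "f x - fN N x = (\<Sum>n. c (n + N) * tent_iter (n + N) x)" if "N \<ge> 1" "x \<in> {0..1}" for N x
    unfolding f_def fN_def by (rule tent_series_tail[OF abs_summable that])
  define A where "A N = (\<Sum>n. (c (n + N))\<^sup>2) / (\<Sum>n. c (n + N))\<^sup>2" for N
  define V where "V N = integral\<^sup>L (lebesgue_on {0..1})
    (\<lambda>x. ((f x - fN N x) / ((1/2) * (\<Sum>n. c (n + N))) - 1)\<^sup>2)" for N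
  define P where "P \<epsilon> N = measure (lebesgue_on {0..1})
    {x \<in> {0..1}. 1 - \<epsilon> \<le> (f x - fN N x) / ((1/2) * (\<Sum>n. c (n + N)))
                \<and> (f x - fN N x) / ((1/2) * (\<Sum>n. c (n + N))) \<le> 1 + \<epsilon>}" for \<epsilon> N
  have V: "V N = A N / 3" if "N \<ge> 1" for N
    unfolding V_def A_def by (rule tent_series_deviation(1)[OF summable_tail tail_nz[OF that] tail[OF that]])
  have P: "1 - A N / 3 / \<epsilon>\<^sup>2 \<le> P \<epsilon> N" if "N \<ge> 1" "\<epsilon> > 0" for N \<epsilon>
    unfolding P_def A_def
    by (rule tent_series_deviation(2)[OF summable_tail tail_nz[OF that(1)] tail[OF that(1)] that(2)])
  have "V \<longlonglongrightarrow> 0 \<longleftrightarrow> (\<lambda>N. A N / 3) \<longlonglongrightarrow> 0"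
    by (intro tendsto_cong eventually_sequentiallyI[of 1]) (simp add: V)
  then have "V \<longlonglongrightarrow> 0 \<longleftrightarrow> A \<longlonglongrightarrow> 0"
    by simp
  moreover have "P \<epsilon> \<longlonglongrightarrow> 1" if "A \<longlonglongrightarrow> 0" "\<epsilon> > 0" for \<epsilon>
  proof -
    have "\<forall>\<^sub>F N in sequentially. 1 - A N / 3 / \<epsilon>\<^sup>2 \<le> P \<epsilon> N"
      by (intro eventually_sequentiallyI[of 1] P \<open>\<epsilon> > 0\<close>)
    moreover have "(\<lambda>N. A N / 3 / \<epsilon>\<^sup>2) \<longlonglongrightarrow> 0"
      by (intro tendsto_divide_zero \<open>A \<longlonglongrightarrow> 0\<close>)
    ultimately show ?thesis
      unfolding P_def[abs_def] by (rule prob_space.tendsto_prob_oneI[OF prob_space_lebesgue_on_01])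
  qed
  ultimately show ?thesis
    unfolding A_def[abs_def] V_def[abs_def] P_def[abs_def] by blast
qed

end
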